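(* Let $k\ge 1$ and let $G$ be a graph with $\delta(G)\ge k$. Let $S$ be a minimal $k$TDS of $G$ with $|S|=\Gamma_{\times k,t}(G)$, and for each $v\in S$ choose a vertex $v'\in\mathrm{opn}_k(v;S)$ and set $S_v=N_G(v')\cap S$ (a $k$-subset of $S$ containing $v$). Let $L=\bigcap_{v\in S}S_v$ and $\ell=|L|$. If $\ell<k$, then \[ \Gamma_{\times k,t}(G)\le\Gamma_{\times (k-\ell),t}(G)+\ell. \]
   Context: A set $S\subseteq V(G)$ is a $k$-tuple total dominating set ($k$TDS) of a graph $G$ with $\delta(G)\ge k$ if $|N_G(x)\cap S|\ge k$ for every $x\in V(G)$. The upper $k$-tuple total domination number $\Gamma_{\times k,t}(G)$ is the maximum cardinality of a minimal (with respect to inclusion) $k$TDS of $G$. For $v\in S$, a vertex $v'$ is a $k$-open private neighbor of $v$ with respect to $S$ if $v\in N_G(v')$ and $|N_G(v')\cap S|=k$; $\mathrm{opn}_k(v;S)$ is the set of such $v'$ (nonempty for every $v\in S$ when $S$ is a minimal $k$TDS). *)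

theory Defs
  imports Main
begin

definition simple_graph :: "'a set \<Rightarrow> ('a \<Rightarrow> 'a \<Rightarrow> bool) \<Rightarrow> bool" where
  "simple_graph V E \<longleftrightarrow> finite V \<and> (\<forall>x y. E x y \<longrightarrow> x \<in> V \<and> y \<in> V)
     \<and> (\<forall>x y. E x y \<longrightarrow> E y x) \<and> (\<forall>x. \<not> E x x)"

definition nbhd :: "'a set \<Rightarrow> ('a \<Rightarrow> 'a \<Rightarrow> bool) \<Rightarrow> 'a \<Rightarrow> 'a set" where
  "nbhd V E x = {y \<in> V. E x y}"

definition min_degree_ge :: "'a set \<Rightarrow> ('a \<Rightarrow> 'a \<Rightarrow> bool) \<Rightarrow> nat \<Rightarrow> bool" where
  "min_degree_ge V E k \<longleftrightarrow> (\<forall>x\<in>V. k \<le> card (nbhd V E x))"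

definition is_kTDS :: "'a set \<Rightarrow> ('a \<Rightarrow> 'a \<Rightarrow> bool) \<Rightarrow> nat \<Rightarrow> 'a set \<Rightarrow> bool" where
  "is_kTDS V E k S \<longleftrightarrow> S \<subseteq> V \<and> (\<forall>x\<in>V. k \<le> card (nbhd V E x \<inter> S))"

definition minimal_kTDS :: "'a set \<Rightarrow> ('a \<Rightarrow> 'a \<Rightarrow> bool) \<Rightarrow> nat \<Rightarrow> 'a set \<Rightarrow> bool" where
  "minimal_kTDS V E k S \<longleftrightarrow> is_kTDS V E k S \<and> (\<forall>T. T \<subset> S \<longrightarrow> \<not> is_kTDS V E k T)"

definition upper_ktuple_tdom :: "'a set \<Rightarrow> ('a \<Rightarrow> 'a \<Rightarrow> bool) \<Rightarrow> nat \<Rightarrow> nat" where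
  "upper_ktuple_tdom V E k = Max (card ` {S. minimal_kTDS V E k S})"

definition opn :: "'a set \<Rightarrow> ('a \<Rightarrow> 'a \<Rightarrow> bool) \<Rightarrow> nat \<Rightarrow> 'a \<Rightarrow> 'a set \<Rightarrow> 'a set" where
  "opn V E k v S = {v' \<in> V. v \<in> nbhd V E v' \<and> card (nbhd V E v' \<inter> S) = k}"

end

theory Submission
  imports Defs
begin

text \<open>Removing from S the vertices L common to all the sets S_v = N(v') \<inter> S lowers every
  domination count by at most |L|, while each private neighbour v' of v \<notin> L sees exactly
  k - |L| vertices of S - L and so stays a private neighbour. Hence S - L is a minimal
  (k - |L|)-tuple total dominating set of size |S| - |L|.\<close>

lemma finite_nbhd_Int:
  assumes "simple_graph V E"
  shows "finite (nbhd V E x \<inter> A)"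
  using assms by (auto simp: simple_graph_def nbhd_def)

lemma card_le_upper_ktuple_tdom:
  assumes "simple_graph V E" and "minimal_kTDS V E k T"
  shows "card T \<le> upper_ktuple_tdom V E k"
proof -
  have "{T. minimal_kTDS V E k T} \<subseteq> Pow V"
    by (auto simp: minimal_kTDS_def is_kTDS_def)
  then have "finite (card ` {T. minimal_kTDS V E k T})"
    using assms(1) by (simp add: simple_graph_def finite_subset)
  then show ?thesis
    unfolding upper_ktuple_tdom_def using assms(2) by (intro Max_ge) auto
qed

lemma minimal_kTDS_if_opn_nonempty:
  assumes "simple_graph V E" and "is_kTDS V E k S"
    and "\<forall>v\<in>S. opn V E k v S \<noteq> {}"
  shows "minimal_kTDS V E k S"
  unfolding minimal_kTDS_def
proof (intro conjI allI impI assms(2))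
  fix T assume "T \<subset> S"
  then obtain v where v: "v \<in> S" "v \<notin> T" by blast
  then obtain w where w: "w \<in> V" "v \<in> nbhd V E w" "card (nbhd V E w \<inter> S) = k"
    using assms(3) by (auto simp: opn_def)
  have "nbhd V E w \<inter> T \<subseteq> (nbhd V E w \<inter> S) - {v}"
    using \<open>T \<subset> S\<close> v by blast
  then have "card (nbhd V E w \<inter> T) \<le> card ((nbhd V E w \<inter> S) - {v})"
    by (intro card_mono) (simp_all add: finite_nbhd_Int[OF assms(1)])
  also have "\<dots> < k"
    using w v(1) finite_nbhd_Int[OF assms(1)]
    by (metis IntI card_Diff1_less)
  finally show "\<not> is_kTDS V E k T"
    using w(1) unfolding is_kTDS_def by force
qed

lemma is_kTDS_Diff:
  assumes "simple_graph V E" and "is_kTDS V E k S" and "finite L"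
  shows "is_kTDS V E (k - card L) (S - L)"
  unfolding is_kTDS_def
proof (intro conjI ballI)
  show "S - L \<subseteq> V" using assms(2) by (auto simp: is_kTDS_def)
next
  fix x assume "x \<in> V"
  then have "k \<le> card (nbhd V E x \<inter> S)"
    using assms(2) by (simp add: is_kTDS_def)
  also have "\<dots> \<le> card ((nbhd V E x \<inter> (S - L)) \<union> L)"
    by (intro card_mono) (auto simp: assms(3) finite_nbhd_Int[OF assms(1)])
  also have "\<dots> \<le> card (nbhd V E x \<inter> (S - L)) + card L"
    by (rule card_Un_le)
  finally show "k - card L \<le> card (nbhd V E x \<inter> (S - L))"
    by simp
qed

lemma opn_Diff:
  assumes "simple_graph V E" and "w \<in> opn V E k v S"
    and "L \<subseteq> nbhd V E w \<inter> S" and "v \<notin> L"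
  shows "w \<in> opn V E (k - card L) v (S - L)"
proof -
  have "nbhd V E w \<inter> (S - L) = (nbhd V E w \<inter> S) - L" by blast
  moreover have "finite L"
    using assms(3) finite_nbhd_Int[OF assms(1)] finite_subset by blast
  ultimately show ?thesis
    using assms(2,3) by (simp add: opn_def card_Diff_subset)
qed

theorem mainTheorem7:
  fixes V :: "'a set" and E :: "'a \<Rightarrow> 'a \<Rightarrow> bool" and k :: nat
    and S :: "'a set" and pn :: "'a \<Rightarrow> 'a"
  assumes "simple_graph V E"
    and "1 \<le> k"
    and "min_degree_ge V E k"
    and "minimal_kTDS V E k S"
    and "card S = upper_ktuple_tdom V E k"
    and "\<forall>v\<in>S. pn v \<in> opn V E k v S"
    and "card (\<Inter>v\<in>S. nbhd V E (pn v) \<inter> S) < k"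
  shows "upper_ktuple_tdom V E k
           \<le> upper_ktuple_tdom V E (k - card (\<Inter>v\<in>S. nbhd V E (pn v) \<inter> S))
             + card (\<Inter>v\<in>S. nbhd V E (pn v) \<inter> S)"
proof (cases "S = {}")
  case True
  then show ?thesis using assms(5) by simp
next
  case False
  define L where "L = (\<Inter>v\<in>S. nbhd V E (pn v) \<inter> S)"
  have L_sub: "\<And>v. v \<in> S \<Longrightarrow> L \<subseteq> nbhd V E (pn v) \<inter> S"
    unfolding L_def by blast
  with False have "L \<subseteq> S" by blast
  have S_kTDS: "is_kTDS V E k S"
    using assms(4) by (simp add: minimal_kTDS_def)
  then have "finite S"
    using assms(1) by (auto simp: is_kTDS_def simple_graph_def finite_subset)
  have "minimal_kTDS V E (k - card L) (S - L)"
  proof (rule minimal_kTDS_if_opn_nonempty[OF assms(1)])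
    show "is_kTDS V E (k - card L) (S - L)"
      using is_kTDS_Diff[OF assms(1) S_kTDS] \<open>L \<subseteq> S\<close> \<open>finite S\<close> finite_subset by blast
    show "\<forall>v\<in>S - L. opn V E (k - card L) v (S - L) \<noteq> {}"
      using opn_Diff[OF assms(1)] assms(6) L_sub by blast
  qed
  then have "card (S - L) \<le> upper_ktuple_tdom V E (k - card L)"
    by (rule card_le_upper_ktuple_tdom[OF assms(1)])
  moreover have "card S = card (S - L) + card L"
    using \<open>L \<subseteq> S\<close> \<open>finite S\<close> by (metis card_Diff_subset card_mono finite_subset le_add_diff_inverse2)
  ultimately show ?thesis
    using assms(5) unfolding L_def by simp
qed

end
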